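(* There exist finite-dimensional Hilbert spaces $\mathcal{H}_1,\mathcal{H}_2$, states $\rho_1$ on $\mathcal{H}_1$ and $\rho_2$ on $\mathcal{H}_2$, a separable observable $A$ on $\mathcal{H}_1\otimes\mathcal{H}_2$, an entangled state $\rho$ on $\mathcal{H}_1\otimes\mathcal{H}_2$, and a real number $\lambda>0$ such that: (1) $\rho$ is a witness of the $\lambda$-lifting $\rho_1\,A^\#\,\rho_2$; and (2) no separable state $\sigma$ on $\mathcal{H}_1\otimes\mathcal{H}_2$ is a witness of the $\lambda$-lifting $\rho_1\,A^\#\,\rho_2$.
   Context: $\rho\in\mathcal{D}^\le(\mathcal{H}_1\otimes\mathcal{H}_2)$ (partial density operators) is a coupling for $\langle\rho_1,\rho_2\rangle$ if $\mathrm{tr}_2(\rho)=\rho_1$ and $\mathrm{tr}_1(\rho)=\rho_2$ (partial traces). For an observable (Hermitian operator) $A$ on $\mathcal{H}_1\otimes\mathcal{H}_2$ and $\lambda>0$, $\rho$ is a witness of the $\lambda$-lifting $\rho_1 A^\#\rho_2$ if $\rho$ is a coupling for $\langle\rho_1,\rho_2\rangle$ and $\mathrm{tr}(A\rho)\ge\lambda$. A positive operator $\rho$ on $\mathcal{H}_1\otimes\mathcal{H}_2$ is separable if $\rho=\sum_m\rho_{m1}\otimes\rho_{m2}$ with each $\rho_{mi}$ a positive operator on $\mathcal{H}_i$; it is entangled if it is not separable. *)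

theory Defs
  imports Complex_Main "Jordan_Normal_Form.Matrix"
begin

text \<open>Finite-dimensional Hilbert spaces are modelled as C^n; operators are n x n complex
matrices. The composite space H1 (x) H2 = C^(n1*n2) with basis index i1*n2 + i2.\<close>

definition cpositive :: "nat \<Rightarrow> complex mat \<Rightarrow> bool" where
  "cpositive n A \<longleftrightarrow> A \<in> carrier_mat n n \<and>
     (\<forall>v \<in> carrier_vec n.
        let q = (\<Sum>i<n. cnj (v $ i) * (A *\<^sub>v v) $ i) in Im q = 0 \<and> Re q \<ge> 0)"

definition hermitian_op :: "nat \<Rightarrow> complex mat \<Rightarrow> bool" where
  "hermitian_op n A \<longleftrightarrow> A \<in> carrier_mat n n \<and>
     (\<forall>i<n. \<forall>j<n. A $$ (i, j) = cnj (A $$ (j, i)))"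

definition trace :: "complex mat \<Rightarrow> complex" where
  "trace A = (\<Sum>i<dim_row A. A $$ (i, i))"

definition is_state :: "nat \<Rightarrow> complex mat \<Rightarrow> bool" where
  "is_state n \<rho> \<longleftrightarrow> cpositive n \<rho> \<and> trace \<rho> = 1"

definition is_pdo :: "nat \<Rightarrow> complex mat \<Rightarrow> bool" where
  "is_pdo n \<rho> \<longleftrightarrow> cpositive n \<rho> \<and> Re (trace \<rho>) \<le> 1"

definition kron :: "nat \<Rightarrow> nat \<Rightarrow> complex mat \<Rightarrow> complex mat \<Rightarrow> complex mat" where
  "kron n1 n2 A B = mat (n1 * n2) (n1 * n2)
     (\<lambda>(i, j). A $$ (i div n2, j div n2) * B $$ (i mod n2, j mod n2))"

definition ptrace2 :: "nat \<Rightarrow> nat \<Rightarrow> complex mat \<Rightarrow> complex mat" where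
  "ptrace2 n1 n2 \<rho> = mat n1 n1 (\<lambda>(i, j). \<Sum>k<n2. \<rho> $$ (i * n2 + k, j * n2 + k))"

definition ptrace1 :: "nat \<Rightarrow> nat \<Rightarrow> complex mat \<Rightarrow> complex mat" where
  "ptrace1 n1 n2 \<rho> = mat n2 n2 (\<lambda>(k, l). \<Sum>i<n1. \<rho> $$ (i * n2 + k, i * n2 + l))"

definition separable :: "nat \<Rightarrow> nat \<Rightarrow> complex mat \<Rightarrow> bool" where
  "separable n1 n2 \<rho> \<longleftrightarrow> cpositive (n1 * n2) \<rho> \<and>
     (\<exists>(K::nat) P Q. (\<forall>m<K. cpositive n1 (P m) \<and> cpositive n2 (Q m)) \<and>
        \<rho> = mat (n1 * n2) (n1 * n2) (\<lambda>ij. \<Sum>m<K. kron n1 n2 (P m) (Q m) $$ ij))"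

definition entangled :: "nat \<Rightarrow> nat \<Rightarrow> complex mat \<Rightarrow> bool" where
  "entangled n1 n2 \<rho> \<longleftrightarrow> cpositive (n1 * n2) \<rho> \<and> \<not> separable n1 n2 \<rho>"

definition coupling :: "nat \<Rightarrow> nat \<Rightarrow> complex mat \<Rightarrow> complex mat \<Rightarrow> complex mat \<Rightarrow> bool" where
  "coupling n1 n2 \<rho> \<rho>1 \<rho>2 \<longleftrightarrow> is_pdo (n1 * n2) \<rho> \<and>
     ptrace2 n1 n2 \<rho> = \<rho>1 \<and> ptrace1 n1 n2 \<rho> = \<rho>2"

definition lifting_witness :: "nat \<Rightarrow> nat \<Rightarrow> complex mat \<Rightarrow> complex mat \<Rightarrow> complex mat
    \<Rightarrow> real \<Rightarrow> complex mat \<Rightarrow> bool" where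
  "lifting_witness n1 n2 \<rho>1 A \<rho>2 lam \<rho> \<longleftrightarrow>
     coupling n1 n2 \<rho> \<rho>1 \<rho>2 \<and> Re (trace (A * \<rho>)) \<ge> lam"

end

theory Submission
  imports Defs
begin

text \<open>Let A be the sum of the operators P \<otimes> P over the four projections P onto the
  Z basis {|0>, |1>} and the X basis {|+>, |->} of C^2, so A = I + (Z \<otimes> Z + X \<otimes> X) / 2.
  For positive 2 x 2 matrices P and Q, tr (A (P \<otimes> Q)) = tr P tr Q + (z_P z_Q + x_P x_Q) / 2,
  where z = P_00 - P_11 and x = P_01 + P_10 are Bloch coordinates, and positivity bounds the
  norm of (z, x) by the trace. Cauchy-Schwarz and linearity then give tr (A \<sigma>) \<le> 3/2 tr \<sigma>
  for every separable \<sigma>. The Bell state (|00> + |11>) / \<surd>2 has maximally mixed marginals and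
  tr (A \<rho>) = 2, so for \<lambda> = 2 it is a witness of the lifting while no separable state is;
  in particular the Bell state is entangled.\<close>

lemma sum_lessThan_2: "(\<Sum>i<2. f i) = f 0 + f (1::nat)"
  by (simp add: numeral_2_eq_2)

lemma sum_lessThan_4: "(\<Sum>i<4. f i) = f 0 + f 1 + f 2 + f (3::nat)"
  by (simp add: numeral_eq_Suc add_ac)

lemma sum_lessThan_mult_div_mod:
  fixes f :: "nat \<Rightarrow> nat \<Rightarrow> 'a::comm_monoid_add"
  shows "(\<Sum>i<m * n. f (i div n) (i mod n)) = (\<Sum>a<m. \<Sum>b<n. f a b)"
proof -
  have "(\<Sum>i<m * n. f (i div n) (i mod n)) = (\<Sum>a<m. \<Sum>i=a*n..<a*n+n. f (i div n) (i mod n))"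
    by (rule sum.nat_group[symmetric])
  also have "\<dots> = (\<Sum>a<m. \<Sum>b<n. f a b)"
  proof (rule sum.cong[OF refl])
    fix a
    have "(\<Sum>i=a*n..<a*n+n. f (i div n) (i mod n)) = (\<Sum>b=0..<n. f ((b + a*n) div n) ((b + a*n) mod n))"
      using sum.shift_bounds_nat_ivl[of "\<lambda>i. f (i div n) (i mod n)" 0 "a*n" n] by (simp add: add.commute)
    also have "\<dots> = (\<Sum>b<n. f a b)"
      by (auto simp: atLeast0LessThan intro: sum.cong)
    finally show "(\<Sum>i=a*n..<a*n+n. f (i div n) (i mod n)) = (\<Sum>b<n. f a b)" .
  qed
  finally show ?thesis .
qed

lemma kron_mult_kron:
  assumes "A \<in> carrier_mat n1 n1" "P \<in> carrier_mat n1 n1" "B \<in> carrier_mat n2 n2" "Q \<in> carrier_mat n2 n2"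
  shows "kron n1 n2 A B * kron n1 n2 P Q = kron n1 n2 (A * P) (B * Q)"
proof (rule eq_matI)
  fix i j assume "i < dim_row (kron n1 n2 (A * P) (B * Q))" "j < dim_col (kron n1 n2 (A * P) (B * Q))"
  then have ij: "i < n1 * n2" "j < n1 * n2" by (auto simp: kron_def)
  then have bounds: "i div n2 < n1" "j div n2 < n1" "i mod n2 < n2" "j mod n2 < n2"
    by (auto simp: less_mult_imp_div_less intro: mod_less_divisor[OF gr0I])
  have "(kron n1 n2 A B * kron n1 n2 P Q) $$ (i, j) = (\<Sum>l<n1 * n2.
      A $$ (i div n2, l div n2) * P $$ (l div n2, j div n2) * (B $$ (i mod n2, l mod n2) * Q $$ (l mod n2, j mod n2)))"
    using ij by (simp add: kron_def scalar_prod_def atLeast0LessThan mult_ac less_mult_imp_div_less)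
  also have "\<dots> = (\<Sum>a<n1. \<Sum>b<n2.
      A $$ (i div n2, a) * P $$ (a, j div n2) * (B $$ (i mod n2, b) * Q $$ (b, j mod n2)))"
    by (rule sum_lessThan_mult_div_mod)
  also have "\<dots> = (A * P) $$ (i div n2, j div n2) * (B * Q) $$ (i mod n2, j mod n2)"
    using assms bounds by (simp add: scalar_prod_def sum_product atLeast0LessThan)
  also have "\<dots> = kron n1 n2 (A * P) (B * Q) $$ (i, j)"
    using ij by (simp add: kron_def)
  finally show "(kron n1 n2 A B * kron n1 n2 P Q) $$ (i, j) = kron n1 n2 (A * P) (B * Q) $$ (i, j)" .
qed (auto simp: kron_def)

lemma trace_kron:
  assumes "A \<in> carrier_mat n1 n1" "B \<in> carrier_mat n2 n2"
  shows "trace (kron n1 n2 A B) = trace A * trace B"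
  using assms sum_lessThan_mult_div_mod[where f = "\<lambda>a b. A $$ (a, a) * B $$ (b, b)" and m = n1 and n = n2]
  by (simp add: trace_def kron_def sum_product)

lemma trace_sum_mat:
  assumes "\<forall>k<K. A k \<in> carrier_mat n n"
  shows "trace (mat n n (\<lambda>ij. \<Sum>k<K. A k $$ ij)) = (\<Sum>k<K. trace (A k))"
proof -
  have "trace (mat n n (\<lambda>ij. \<Sum>k<K. A k $$ ij)) = (\<Sum>k<K. \<Sum>i<n. A k $$ (i, i))"
    unfolding trace_def by (simp add: sum.swap[of _ "{..<n}" "{..<K}"])
  also have "\<dots> = (\<Sum>k<K. trace (A k))"
    using assms unfolding trace_def by (intro sum.cong) auto
  finally show ?thesis .
qed

lemma trace_mult_sum_mat:
  assumes "\<forall>k<K. A k \<in> carrier_mat n n" "\<forall>l<L. B l \<in> carrier_mat n n"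
  shows "trace (mat n n (\<lambda>ij. \<Sum>k<K. A k $$ ij) * mat n n (\<lambda>ij. \<Sum>l<L. B l $$ ij))
    = (\<Sum>k<K. \<Sum>l<L. trace (A k * B l))"
proof -
  have "trace (mat n n (\<lambda>ij. \<Sum>k<K. A k $$ ij) * mat n n (\<lambda>ij. \<Sum>l<L. B l $$ ij))
      = (\<Sum>i<n. \<Sum>j<n. (\<Sum>k<K. A k $$ (i, j)) * (\<Sum>l<L. B l $$ (j, i)))"
    unfolding trace_def by (simp add: scalar_prod_def atLeast0LessThan)
  also have "\<dots> = (\<Sum>k<K. \<Sum>l<L. \<Sum>i<n. \<Sum>j<n. A k $$ (i, j) * B l $$ (j, i))"
    by (simp add: sum_product sum.swap[of _ "{..<n}" "{..<K}"] sum.swap[of _ "{..<n}" "{..<L}"])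
  also have "\<dots> = (\<Sum>k<K. \<Sum>l<L. trace (A k * B l))"
  proof (intro sum.cong refl)
    fix k l assume "k \<in> {..<K}" "l \<in> {..<L}"
    with assms have "A k \<in> carrier_mat n n" "B l \<in> carrier_mat n n" by auto
    then show "(\<Sum>i<n. \<Sum>j<n. A k $$ (i, j) * B l $$ (j, i)) = trace (A k * B l)"
      unfolding trace_def by (simp add: scalar_prod_def atLeast0LessThan)
  qed
  finally show ?thesis .
qed

definition rank_one :: "nat \<Rightarrow> real \<Rightarrow> complex vec \<Rightarrow> complex mat" where
  "rank_one n c u = mat n n (\<lambda>(i, j). of_real c * (u $ i * cnj (u $ j)))"

definition tensor_vec :: "nat \<Rightarrow> nat \<Rightarrow> complex vec \<Rightarrow> complex vec \<Rightarrow> complex vec" where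
  "tensor_vec n1 n2 u w = vec (n1 * n2) (\<lambda>i. u $ (i div n2) * w $ (i mod n2))"

lemma kron_rank_one:
  "kron n1 n2 (rank_one n1 c u) (rank_one n2 d w) = rank_one (n1 * n2) (c * d) (tensor_vec n1 n2 u w)"
  (is "?K = ?R")
proof (rule eq_matI)
  fix i j assume "i < dim_row ?R" "j < dim_col ?R"
  then have "i < n1 * n2" "j < n1 * n2" by (auto simp: rank_one_def)
  moreover from this have "i div n2 < n1" "j div n2 < n1" "i mod n2 < n2" "j mod n2 < n2"
    by (auto simp: less_mult_imp_div_less intro: mod_less_divisor[OF gr0I])
  ultimately show "?K $$ (i, j) = ?R $$ (i, j)"
    by (simp add: kron_def rank_one_def tensor_vec_def mult_ac)
qed (auto simp: kron_def rank_one_def)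

lemma cnj_mult_self: "cnj z * z = of_real ((cmod z)\<^sup>2)"
  using complex_norm_square[of z] by (simp add: mult.commute)

lemma cpositive_rank_one:
  assumes "0 \<le> c"
  shows "cpositive n (rank_one n c u)"
  unfolding cpositive_def Let_def
proof (intro conjI ballI)
  show "rank_one n c u \<in> carrier_mat n n" by (simp add: rank_one_def)
  fix v :: "complex vec" assume "v \<in> carrier_vec n"
  define w where "w = (\<Sum>j<n. cnj (u $ j) * v $ j)"
  have "(\<Sum>i<n. cnj (v $ i) * (rank_one n c u *\<^sub>v v) $ i)
      = (\<Sum>i<n. cnj (v $ i) * (of_real c * u $ i * w))"
    using \<open>v \<in> carrier_vec n\<close>
    by (simp add: rank_one_def w_def scalar_prod_def atLeast0LessThan sum_distrib_left mult_ac)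
  also have "\<dots> = of_real c * ((\<Sum>i<n. cnj (v $ i) * u $ i) * w)"
    by (simp add: sum_distrib_left sum_distrib_right mult_ac)
  also have "\<dots> = of_real (c * (cmod w)\<^sup>2)"
  proof -
    have "(\<Sum>i<n. cnj (v $ i) * u $ i) = cnj w"
      by (simp add: w_def mult.commute)
    then show ?thesis by (simp add: cnj_mult_self)
  qed
  finally show "Im (\<Sum>i<n. cnj (v $ i) * (rank_one n c u *\<^sub>v v) $ i) = 0"
    and "0 \<le> Re (\<Sum>i<n. cnj (v $ i) * (rank_one n c u *\<^sub>v v) $ i)"
    using assms by simp_all
qed

lemma cpositive_sum_mat:
  assumes "\<forall>k<K. cpositive n (A k)"
  shows "cpositive n (mat n n (\<lambda>ij. \<Sum>k<K. A k $$ ij))"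
  unfolding cpositive_def Let_def
proof (intro conjI ballI)
  show "mat n n (\<lambda>ij. \<Sum>k<K. A k $$ ij) \<in> carrier_mat n n" by simp
  fix v :: "complex vec" assume v: "v \<in> carrier_vec n"
  define q where "q k = (\<Sum>i<n. cnj (v $ i) * (A k *\<^sub>v v) $ i)" for k
  have A: "A k \<in> carrier_mat n n" if "k < K" for k
    using assms that by (simp add: cpositive_def)
  have q: "Im (q k) = 0 \<and> 0 \<le> Re (q k)" if "k < K" for k
    using assms that v by (simp add: cpositive_def q_def Let_def)
  have "(\<Sum>i<n. cnj (v $ i) * (mat n n (\<lambda>ij. \<Sum>k<K. A k $$ ij) *\<^sub>v v) $ i)
      = (\<Sum>i<n. \<Sum>j<n. \<Sum>k<K. cnj (v $ i) * (A k $$ (i, j) * v $ j))"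
    using v by (simp add: scalar_prod_def atLeast0LessThan sum_distrib_left sum_distrib_right)
  also have "\<dots> = (\<Sum>k<K. \<Sum>i<n. \<Sum>j<n. cnj (v $ i) * (A k $$ (i, j) * v $ j))"
    by (simp add: sum.swap[of _ "{..<n}" "{..<K}"])
  also have "\<dots> = (\<Sum>k<K. q k)"
  proof (intro sum.cong refl)
    fix k assume "k \<in> {..<K}"
    then have "A k \<in> carrier_mat n n" using A by simp
    then show "(\<Sum>i<n. \<Sum>j<n. cnj (v $ i) * (A k $$ (i, j) * v $ j)) = q k"
      using v by (simp add: q_def scalar_prod_def atLeast0LessThan sum_distrib_left)
  qed
  finally show "Im (\<Sum>i<n. cnj (v $ i) * (mat n n (\<lambda>ij. \<Sum>k<K. A k $$ ij) *\<^sub>v v) $ i) = 0"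
    and "0 \<le> Re (\<Sum>i<n. cnj (v $ i) * (mat n n (\<lambda>ij. \<Sum>k<K. A k $$ ij) *\<^sub>v v) $ i)"
    using q by (auto simp: Im_sum Re_sum intro!: sum_nonneg)
qed

definition maximally_mixed :: "nat \<Rightarrow> complex mat" where
  "maximally_mixed n = mat n n (\<lambda>(i, j). if i = j then 1 / of_nat n else 0)"

lemma is_state_maximally_mixed:
  assumes "0 < n"
  shows "is_state n (maximally_mixed n)"
  unfolding is_state_def cpositive_def Let_def
proof (intro conjI ballI)
  show "maximally_mixed n \<in> carrier_mat n n" by (simp add: maximally_mixed_def)
  show "trace (maximally_mixed n) = 1"
    using assms by (simp add: trace_def maximally_mixed_def)
  fix v :: "complex vec" assume v: "v \<in> carrier_vec n"
  have "(maximally_mixed n *\<^sub>v v) $ i = 1 / of_nat n * v $ i" if "i < n" for i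
    using v that by (simp add: maximally_mixed_def scalar_prod_def atLeast0LessThan
        if_distrib[of "\<lambda>x. x * _"] cong: if_cong)
  then have "(\<Sum>i<n. cnj (v $ i) * (maximally_mixed n *\<^sub>v v) $ i)
      = of_real ((\<Sum>i<n. (cmod (v $ i))\<^sup>2) / real n)"
    by (simp add: cnj_mult_self sum_divide_distrib)
  then show "Im (\<Sum>i<n. cnj (v $ i) * (maximally_mixed n *\<^sub>v v) $ i) = 0"
    and "0 \<le> Re (\<Sum>i<n. cnj (v $ i) * (maximally_mixed n *\<^sub>v v) $ i)"
    by (simp_all add: sum_nonneg)
qed

lemma cpositive_2_form:
  fixes s t :: complex
  assumes "cpositive 2 P"
  defines "q \<equiv> cnj s * (P $$ (0, 0) * s + P $$ (0, 1) * t) + cnj t * (P $$ (1, 0) * s + P $$ (1, 1) * t)"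
  shows "Im q = 0" "0 \<le> Re q"
proof -
  have P: "P \<in> carrier_mat 2 2" using assms unfolding cpositive_def by auto
  define v :: "complex vec" where "v = vec 2 (\<lambda>i. if i = 0 then s else t)"
  have "v \<in> carrier_vec 2" unfolding v_def by simp
  then have "Im (\<Sum>i<2. cnj (v $ i) * (P *\<^sub>v v) $ i) = 0 \<and> 0 \<le> Re (\<Sum>i<2. cnj (v $ i) * (P *\<^sub>v v) $ i)"
    using assms unfolding cpositive_def Let_def by blast
  moreover have "(\<Sum>i<2. cnj (v $ i) * (P *\<^sub>v v) $ i) = q"
    using P by (simp add: q_def v_def scalar_prod_def atLeast0LessThan sum_lessThan_2)
  ultimately show "Im q = 0" "0 \<le> Re q" by simp_all
qed

lemma nonneg_binary_form_discriminant:
  fixes a b u :: real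
  assumes "\<And>s t. 0 \<le> a * s\<^sup>2 + u * s * t + b * t\<^sup>2"
  shows "u\<^sup>2 \<le> 4 * a * b"
proof -
  have "0 \<le> a" "0 \<le> b" using assms[of 1 0] assms[of 0 1] by simp_all
  have "0 \<le> a * (4 * a * b - u\<^sup>2)" "0 \<le> b * (4 * a * b - u\<^sup>2)"
    using assms[of "-u" "2 * a"] assms[of "2 * b" "-u"] by (simp_all add: algebra_simps power2_eq_square)
  moreover have "0 \<le> a * u\<^sup>2 + b - u\<^sup>2"
    using assms[of "-u" 1] by (simp add: algebra_simps power2_eq_square)
  ultimately show ?thesis
    using \<open>0 \<le> a\<close> \<open>0 \<le> b\<close> by (cases "a = 0 \<and> b = 0") (auto simp: zero_le_mult_iff)
qed

lemma cpositive_2_bloch: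
  assumes "cpositive 2 P"
  shows "Im (P $$ (0, 0)) = 0" "Im (P $$ (1, 1)) = 0" "Im (P $$ (0, 1) + P $$ (1, 0)) = 0"
    and "0 \<le> Re (P $$ (0, 0) + P $$ (1, 1))"
    and "(Re (P $$ (0, 0) - P $$ (1, 1)))\<^sup>2 + (Re (P $$ (0, 1) + P $$ (1, 0)))\<^sup>2
      \<le> (Re (P $$ (0, 0) + P $$ (1, 1)))\<^sup>2"
proof -
  note form = cpositive_2_form[OF assms]
  show "Im (P $$ (0, 0)) = 0" using form(1)[of 1 0] by simp
  show "Im (P $$ (1, 1)) = 0" using form(1)[of 0 1] by simp
  show "Im (P $$ (0, 1) + P $$ (1, 0)) = 0"
    using form(1)[of 1 1] form(1)[of 1 0] form(1)[of 0 1] by simp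
  show "0 \<le> Re (P $$ (0, 0) + P $$ (1, 1))" using form(2)[of 1 0] form(2)[of 0 1] by simp
  have "0 \<le> Re (P $$ (0, 0)) * s\<^sup>2 + Re (P $$ (0, 1) + P $$ (1, 0)) * s * t + Re (P $$ (1, 1)) * t\<^sup>2"
    for s t :: real
    using form(2)[of "of_real s" "of_real t"] by (simp add: algebra_simps power2_eq_square)
  then have "(Re (P $$ (0, 1) + P $$ (1, 0)))\<^sup>2 \<le> 4 * Re (P $$ (0, 0)) * Re (P $$ (1, 1))"
    by (rule nonneg_binary_form_discriminant)
  then show "(Re (P $$ (0, 0) - P $$ (1, 1)))\<^sup>2 + (Re (P $$ (0, 1) + P $$ (1, 0)))\<^sup>2
      \<le> (Re (P $$ (0, 0) + P $$ (1, 1)))\<^sup>2"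
    by (simp add: power2_eq_square algebra_simps)
qed

lemma inner_le_of_sum_squares_le:
  fixes a b c d s t :: real
  assumes "a\<^sup>2 + b\<^sup>2 \<le> s\<^sup>2" "c\<^sup>2 + d\<^sup>2 \<le> t\<^sup>2" "0 \<le> s" "0 \<le> t"
  shows "a * c + b * d \<le> s * t"
proof (rule power2_le_imp_le)
  have "(a * c + b * d)\<^sup>2 \<le> (a\<^sup>2 + b\<^sup>2) * (c\<^sup>2 + d\<^sup>2)"
    using zero_le_power2[of "a * d - b * c"] by (simp add: power2_eq_square algebra_simps)
  also have "\<dots> \<le> s\<^sup>2 * t\<^sup>2"
    using assms by (intro mult_mono) auto
  finally show "(a * c + b * d)\<^sup>2 \<le> (s * t)\<^sup>2" by (simp add: power_mult_distrib)
  show "0 \<le> s * t" using assms by simp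
qed

lemma trace_2: "A \<in> carrier_mat 2 2 \<Longrightarrow> trace A = A $$ (0, 0) + A $$ (1, 1)"
  by (simp add: trace_def sum_lessThan_2)

text \<open>The weight 1/2 normalises the X-basis vectors (1, 1) and (1, -1).\<close>
definition zx_proj :: "nat \<Rightarrow> complex mat" where
  "zx_proj m = (if m = 0 then rank_one 2 1 (unit_vec 2 0)
     else if m = 1 then rank_one 2 1 (unit_vec 2 1)
     else if m = 2 then rank_one 2 (1/2) (vec 2 (\<lambda>_. 1))
     else rank_one 2 (1/2) (vec 2 (\<lambda>i. if i = 0 then 1 else -1)))"

lemma zx_proj_carrier: "zx_proj m \<in> carrier_mat 2 2"
  by (simp add: zx_proj_def rank_one_def)

lemma cpositive_zx_proj: "cpositive 2 (zx_proj m)"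
  by (simp add: zx_proj_def cpositive_rank_one)

lemma cpositive_kron_zx_proj: "cpositive (2 * 2) (kron 2 2 (zx_proj m) (zx_proj m))"
  by (simp add: zx_proj_def kron_rank_one cpositive_rank_one del: mult_2)

lemma trace_zx_proj_mult:
  assumes "P \<in> carrier_mat 2 2"
  shows "trace (zx_proj 0 * P) = P $$ (0, 0)" "trace (zx_proj 1 * P) = P $$ (1, 1)"
    and "trace (zx_proj 2 * P) = (P $$ (0, 0) + P $$ (0, 1) + P $$ (1, 0) + P $$ (1, 1)) / 2"
    and "trace (zx_proj 3 * P) = (P $$ (0, 0) - P $$ (0, 1) - P $$ (1, 0) + P $$ (1, 1)) / 2"
  using assms zx_proj_carrier
  by (simp_all add: trace_def zx_proj_def rank_one_def scalar_prod_def atLeast0LessThan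
      sum_lessThan_2 field_simps)

lemma sum_trace_zx_proj_mult:
  assumes "P \<in> carrier_mat 2 2" "Q \<in> carrier_mat 2 2"
  shows "(\<Sum>m<4. trace (zx_proj m * P) * trace (zx_proj m * Q)) = trace P * trace Q
    + ((P $$ (0, 0) - P $$ (1, 1)) * (Q $$ (0, 0) - Q $$ (1, 1))
       + (P $$ (0, 1) + P $$ (1, 0)) * (Q $$ (0, 1) + Q $$ (1, 0))) / 2"
  unfolding sum_lessThan_4 trace_zx_proj_mult[OF assms(1)] trace_zx_proj_mult[OF assms(2)]
    trace_2[OF assms(1)] trace_2[OF assms(2)]
  by (simp add: field_simps)

lemma Re_sum_trace_zx_proj_mult_le:
  assumes "cpositive 2 P" "cpositive 2 Q"
  shows "Re (\<Sum>m<4. trace (zx_proj m * P) * trace (zx_proj m * Q)) \<le> 3/2 * Re (trace P * trace Q)"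
proof -
  have carrier: "P \<in> carrier_mat 2 2" "Q \<in> carrier_mat 2 2"
    using assms by (simp_all add: cpositive_def)
  note bP = cpositive_2_bloch[OF assms(1)] and bQ = cpositive_2_bloch[OF assms(2)]
  define tP zP xP where "tP = Re (P $$ (0, 0) + P $$ (1, 1))" "zP = Re (P $$ (0, 0) - P $$ (1, 1))"
    "xP = Re (P $$ (0, 1) + P $$ (1, 0))"
  define tQ zQ xQ where "tQ = Re (Q $$ (0, 0) + Q $$ (1, 1))" "zQ = Re (Q $$ (0, 0) - Q $$ (1, 1))"
    "xQ = Re (Q $$ (0, 1) + Q $$ (1, 0))"
  have "P $$ (0, 0) + P $$ (1, 1) = of_real tP" "P $$ (0, 0) - P $$ (1, 1) = of_real zP"
    "P $$ (0, 1) + P $$ (1, 0) = of_real xP"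
    unfolding tP_zP_xP_def using bP(1-3) by (simp_all add: complex_eq_iff)
  moreover have "Q $$ (0, 0) + Q $$ (1, 1) = of_real tQ" "Q $$ (0, 0) - Q $$ (1, 1) = of_real zQ"
    "Q $$ (0, 1) + Q $$ (1, 0) = of_real xQ"
    unfolding tQ_zQ_xQ_def using bQ(1-3) by (simp_all add: complex_eq_iff)
  ultimately have "(\<Sum>m<4. trace (zx_proj m * P) * trace (zx_proj m * Q))
      = of_real (tP * tQ + (zP * zQ + xP * xQ) / 2)" "trace P * trace Q = of_real (tP * tQ)"
    by (simp_all add: sum_trace_zx_proj_mult carrier trace_2)
  moreover have "zP * zQ + xP * xQ \<le> tP * tQ"
    using bP(5) bQ(5) bP(4) bQ(4) unfolding tP_zP_xP_def tQ_zQ_xQ_def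
    by (rule inner_le_of_sum_squares_le)
  ultimately show ?thesis by simp
qed

definition zx_observable :: "complex mat" where
  "zx_observable = mat (2 * 2) (2 * 2) (\<lambda>ij. \<Sum>m<4. kron 2 2 (zx_proj m) (zx_proj m) $$ ij)"

lemma zx_observable_eq:
  "zx_observable = mat 4 4 (\<lambda>(i, j). if i = j then (if i = 0 \<or> i = 3 then 3/2 else 1/2)
     else if i + j = 3 then 1/2 else 0)" (is "_ = ?A")
proof (rule eq_matI)
  fix i j assume "i < dim_row ?A" "j < dim_col ?A"
  then have "i \<in> {0, 1, 2, 3}" "j \<in> {0, 1, 2, 3}" by auto
  then show "zx_observable $$ (i, j) = ?A $$ (i, j)"
    by (auto simp: zx_observable_def kron_def zx_proj_def rank_one_def sum_lessThan_4)
qed (simp_all add: zx_observable_def)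

lemma hermitian_zx_observable: "hermitian_op (2 * 2) zx_observable"
  unfolding hermitian_op_def zx_observable_eq by auto

lemma separable_zx_observable: "separable 2 2 zx_observable"
  unfolding separable_def zx_observable_def
  using cpositive_sum_mat[where K = 4 and A = "\<lambda>m. kron 2 2 (zx_proj m) (zx_proj m)"]
  by (blast intro: cpositive_kron_zx_proj cpositive_zx_proj)

lemma Re_trace_zx_observable_mult_le:
  assumes "separable 2 2 \<sigma>"
  shows "Re (trace (zx_observable * \<sigma>)) \<le> 3/2 * Re (trace \<sigma>)"
proof -
  obtain K :: nat and P Q where pos: "\<forall>k<K. cpositive 2 (P k) \<and> cpositive 2 (Q k)"
    and \<sigma>: "\<sigma> = mat (2 * 2) (2 * 2) (\<lambda>ij. \<Sum>k<K. kron 2 2 (P k) (Q k) $$ ij)"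
    using assms unfolding separable_def by blast
  have carrier: "P k \<in> carrier_mat 2 2" "Q k \<in> carrier_mat 2 2" if "k < K" for k
    using pos that by (simp_all add: cpositive_def)
  have "trace (zx_observable * \<sigma>)
      = (\<Sum>m<4. \<Sum>k<K. trace (kron 2 2 (zx_proj m) (zx_proj m) * kron 2 2 (P k) (Q k)))"
    unfolding zx_observable_def \<sigma> by (rule trace_mult_sum_mat) (simp_all add: kron_def)
  also have "\<dots> = (\<Sum>k<K. \<Sum>m<4. trace (zx_proj m * P k) * trace (zx_proj m * Q k))"
  proof -
    have "trace (kron 2 2 (zx_proj m) (zx_proj m) * kron 2 2 (P k) (Q k))
        = trace (zx_proj m * P k) * trace (zx_proj m * Q k)" if "k < K" for m k
      using carrier[OF that] zx_proj_carrier[of m] by (simp add: kron_mult_kron trace_kron)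
    then show ?thesis by (subst sum.swap) simp
  qed
  finally have "Re (trace (zx_observable * \<sigma>))
      = (\<Sum>k<K. Re (\<Sum>m<4. trace (zx_proj m * P k) * trace (zx_proj m * Q k)))"
    by (simp add: Re_sum)
  also have "\<dots> \<le> (\<Sum>k<K. 3/2 * Re (trace (P k) * trace (Q k)))"
    using pos by (intro sum_mono Re_sum_trace_zx_proj_mult_le) auto
  also have "\<dots> = 3/2 * Re (trace \<sigma>)"
  proof -
    have "trace \<sigma> = (\<Sum>k<K. trace (kron 2 2 (P k) (Q k)))"
      unfolding \<sigma> by (rule trace_sum_mat) (simp add: kron_def)
    also have "\<dots> = (\<Sum>k<K. trace (P k) * trace (Q k))"
      using carrier by (intro sum.cong refl) (simp add: trace_kron)
    finally show ?thesis by (simp add: Re_sum sum_distrib_left)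
  qed
  finally show ?thesis .
qed

definition bell_state :: "complex mat" where
  "bell_state = rank_one (2 * 2) (1/2) (vec (2 * 2) (\<lambda>i. if i = 0 \<or> i = 3 then 1 else 0))"

lemma is_state_bell_state: "is_state (2 * 2) bell_state"
  unfolding is_state_def bell_state_def
  by (intro conjI cpositive_rank_one) (simp_all add: rank_one_def trace_def sum_lessThan_4)

lemma trace_zx_observable_mult_bell_state: "trace (zx_observable * bell_state) = 2"
  by (simp add: zx_observable_eq bell_state_def rank_one_def trace_def scalar_prod_def
      atLeast0LessThan sum_lessThan_4)

lemma entangled_bell_state: "entangled 2 2 bell_state"
proof -
  have "\<not> separable 2 2 bell_state"
  proof
    assume "separable 2 2 bell_state"
    from Re_trace_zx_observable_mult_le[OF this] show False
      using is_state_bell_state trace_zx_observable_mult_bell_state by (simp add: is_state_def)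
  qed
  then show ?thesis
    using is_state_bell_state by (simp add: entangled_def is_state_def)
qed

lemma ptrace2_bell_state: "ptrace2 2 2 bell_state = maximally_mixed 2"
  by (rule eq_matI)
    (auto simp: ptrace2_def maximally_mixed_def bell_state_def rank_one_def sum_lessThan_2 less_2_cases_iff)

lemma ptrace1_bell_state: "ptrace1 2 2 bell_state = maximally_mixed 2"
  by (rule eq_matI)
    (auto simp: ptrace1_def maximally_mixed_def bell_state_def rank_one_def sum_lessThan_2 less_2_cases_iff)

theorem proposition3p10:
  shows "\<exists>(n1::nat) (n2::nat) \<rho>1 \<rho>2 A \<rho> (lam::real).
    0 < n1 \<and> 0 < n2 \<and>
    is_state n1 \<rho>1 \<and> is_state n2 \<rho>2 \<and>
    hermitian_op (n1 * n2) A \<and> separable n1 n2 A \<and>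
    is_state (n1 * n2) \<rho> \<and> entangled n1 n2 \<rho> \<and>
    lam > 0 \<and>
    lifting_witness n1 n2 \<rho>1 A \<rho>2 lam \<rho> \<and>
    (\<forall>\<sigma>. is_state (n1 * n2) \<sigma> \<and> separable n1 n2 \<sigma> \<longrightarrow>
        \<not> lifting_witness n1 n2 \<rho>1 A \<rho>2 lam \<sigma>)"
proof (intro exI conjI allI impI)
  show "hermitian_op (2 * 2) zx_observable" by (rule hermitian_zx_observable)
  show "separable 2 2 zx_observable" by (rule separable_zx_observable)
  show "is_state (2 * 2) bell_state" by (rule is_state_bell_state)
  show "entangled 2 2 bell_state" by (rule entangled_bell_state)
  show "lifting_witness 2 2 (maximally_mixed 2) zx_observable (maximally_mixed 2) 2 bell_state"
    using is_state_bell_state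
    by (simp add: lifting_witness_def coupling_def is_pdo_def is_state_def ptrace1_bell_state
        ptrace2_bell_state trace_zx_observable_mult_bell_state)
  fix \<sigma> assume "is_state (2 * 2) \<sigma> \<and> separable 2 2 \<sigma>"
  with Re_trace_zx_observable_mult_le[of \<sigma>]
  show "\<not> lifting_witness 2 2 (maximally_mixed 2) zx_observable (maximally_mixed 2) 2 \<sigma>"
    by (simp add: lifting_witness_def is_state_def)
qed (simp_all add: is_state_maximally_mixed)

end
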